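(* Let $k\geq2$ and let $L=(l_1,\dots,l_k)$ be generic and reduced positive integers with sum $n$. Let $\xi$ be a closed edge-path in $Tonn^{n,k}(L)$ making $p_i\geq0$ steps of type $i$ (in the order $E_1^{p_1}E_2^{p_2}\cdots E_k^{p_k}$), which represents a non-trivial class in $H_1(Tonn^{n,k}(L);\mathbb{Z})$. Then $p_i\geq3$ for some $i\in[k]$. Moreover, $\omega(\xi)=\sum_{i}p_ia_i$ cannot be written as $a_I-a_J$ for any subsets $I,J\subseteq[k]$.
   Context: $L$ is generic if for all $I,J\subseteq[k]$, $\sum_{i\in I}l_i=\sum_{j\in J}l_j$ implies $I=J$; reduced if $\gcd(l_1,\dots,l_k)=1$. The generalized tonnetz $Tonn^{n,k}(L)$ is the simplicial complex on vertex set $\mathbb{Z}_n$ whose maximal simplices are $\Delta(x;\sigma)=\{x,\,x+l_{\sigma(1)},\dots,x+l_{\sigma(1)}+\dots+l_{\sigma(k-1)}\}$ for $x\in\mathbb{Z}_n$, $\sigma\in S_k$. A step of type $i$ is an oriented 1-simplex from $y$ to $y+l_i$. $a_i=ke_i-(1,\dots,1)\in\mathbb{Z}^k$ (the value of the canonical vector cocycle $\omega$ on a step of type $i$), and for $I\subseteq[k]$, $a_I=\sum_{i\in I}a_i$ (with $a_\emptyset=0$). *)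

theory Defs
  imports "HOL-Combinatorics.Permutations"
begin

text \<open>Vertices of the tonnetz are residues mod n, represented
  by integers in \<open>{0..<n}\<close>.\<close>

definition generic :: "nat \<Rightarrow> (nat \<Rightarrow> nat) \<Rightarrow> bool" where
  "generic k l \<longleftrightarrow> (\<forall>I J. I \<subseteq> {1..k} \<longrightarrow> J \<subseteq> {1..k} \<longrightarrow>
      sum l I = sum l J \<longrightarrow> I = J)"

definition reduced :: "nat \<Rightarrow> (nat \<Rightarrow> nat) \<Rightarrow> bool" where
  "reduced k l \<longleftrightarrow> Gcd (l ` {1..k}) = 1"

definition tonn_simplex :: "int \<Rightarrow> nat \<Rightarrow> (nat \<Rightarrow> nat) \<Rightarrow> int \<Rightarrow> (nat \<Rightarrow> nat) \<Rightarrow> int set" where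
  "tonn_simplex n k l x \<sigma> = {(x + (\<Sum>j\<in>{1..m}. int (l (\<sigma> j)))) mod n | m. m < k}"

definition tonn_faces :: "int \<Rightarrow> nat \<Rightarrow> (nat \<Rightarrow> nat) \<Rightarrow> int set set" where
  "tonn_faces n k l = {T. \<exists>x \<sigma>. \<sigma> permutes {1..k} \<and> T \<subseteq> tonn_simplex n k l x \<sigma>}"

text \<open>Simplicial integer 1-chains: functions on ordered pairs of vertices
  (oriented 1-simplices); the oriented edge (u,v) is the chain \<open>[u,v] = -[v,u]\<close>.\<close>
definition edge_chain :: "int \<Rightarrow> int \<Rightarrow> (int \<times> int \<Rightarrow> int)" where
  "edge_chain u v = (\<lambda>e. (if e = (u, v) then 1 else 0) - (if e = (v, u) then 1 else 0))"

definition tri_boundary :: "int \<times> int \<times> int \<Rightarrow> (int \<times> int \<Rightarrow> int)" where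
  "tri_boundary t = (case t of (a, b, c) \<Rightarrow>
     (\<lambda>e. edge_chain a b e + edge_chain b c e + edge_chain c a e))"

definition is_boundary :: "int \<Rightarrow> nat \<Rightarrow> (nat \<Rightarrow> nat) \<Rightarrow> (int \<times> int \<Rightarrow> int) \<Rightarrow> bool" where
  "is_boundary n k l c \<longleftrightarrow> (\<exists>S f. finite S \<and>
     (\<forall>(a, b, d) \<in> S. {a, b, d} \<in> tonn_faces n k l \<and> card {a, b, d} = 3) \<and>
     c = (\<lambda>e. \<Sum>t\<in>S. f t * tri_boundary t e))"

definition path_types :: "nat \<Rightarrow> (nat \<Rightarrow> nat) \<Rightarrow> nat list" where
  "path_types k p = concat (map (\<lambda>i. replicate (p i) i) [1..<Suc k])"

definition path_vertex :: "int \<Rightarrow> (nat \<Rightarrow> nat) \<Rightarrow> nat list \<Rightarrow> int \<Rightarrow> nat \<Rightarrow> int" where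
  "path_vertex n l ts x0 m = (x0 + (\<Sum>j<m. int (l (ts ! j)))) mod n"

definition path_chain :: "int \<Rightarrow> (nat \<Rightarrow> nat) \<Rightarrow> nat list \<Rightarrow> int \<Rightarrow> (int \<times> int \<Rightarrow> int)" where
  "path_chain n l ts x0 = (\<lambda>e. \<Sum>m<length ts.
      edge_chain (path_vertex n l ts x0 m) (path_vertex n l ts x0 (Suc m)) e)"

definition a_vec :: "nat \<Rightarrow> nat \<Rightarrow> nat \<Rightarrow> int" where
  "a_vec k i j = (if j = i then int k else 0) - 1"

definition a_set :: "nat \<Rightarrow> nat set \<Rightarrow> nat \<Rightarrow> int" where
  "a_set k I j = (\<Sum>i\<in>I. a_vec k i j)"

end

(*
  Closing the path forces n | \<Sum> p_i l_i. If all exponents p_i lie within 1 of some c, write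
  p = c + 1_I - 1_J; then n divides \<Sum>_I l - \<Sum>_J l, a number of absolute value at most n, and
  genericity leaves only I = J or {I, J} = {[k], {}}: the exponents are all equal. Since any two
  steps span a 2-simplex \<Delta>(y;\<sigma>), the order of the steps does not matter up to boundaries, and
  the loop E_1 \<dots> E_k bounds a fan of triangles inside \<Delta>(y; id). So a path with constant
  exponents is null-homologous.
  Both conclusions reduce to this: p_i \<le> 2 for all i means |p_i - 1| \<le> 1, and
  \<omega>(\<xi>) = a_I - a_J forces p = c + 1_I - 1_J, because the j-th coordinate of \<omega>(\<xi>) is k p_j - \<Sum> p.
*)
theory Submission
  imports Defs "HOL-Library.Multiset" "HOL-Library.Function_Algebras"
begin

text \<open>The start point of a walk is not reduced mod n, so walks concatenate by adding step lengths.\<close>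
fun walk_chain :: "int \<Rightarrow> (nat \<Rightarrow> nat) \<Rightarrow> int \<Rightarrow> nat list \<Rightarrow> int \<times> int \<Rightarrow> int" where
  "walk_chain n l y [] = 0"
| "walk_chain n l y (t # ts) =
     edge_chain (y mod n) ((y + int (l t)) mod n) + walk_chain n l (y + int (l t)) ts"

lemma path_vertex_Suc_Cons:
  "path_vertex n l (t # ts) y (Suc m) = path_vertex n l ts (y + int (l t)) m"
  unfolding path_vertex_def by (simp add: sum.lessThan_Suc_shift add.assoc del: sum.lessThan_Suc)

lemma path_chain_eq_walk_chain: "path_chain n l ts y = walk_chain n l y ts"
proof (induction ts arbitrary: y)
  case Nil
  show ?case by (simp add: path_chain_def fun_eq_iff)
next
  case (Cons t ts)
  have "path_chain n l (t # ts) y = edge_chain (y mod n) ((y + int (l t)) mod n)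
          + path_chain n l ts (y + int (l t))"
    unfolding path_chain_def plus_fun_def
    by (simp add: sum.lessThan_Suc_shift path_vertex_Suc_Cons del: sum.lessThan_Suc)
      (simp add: path_vertex_def)
  with Cons.IH show ?case by simp
qed

lemma path_vertex_length:
  "path_vertex n l ts y (length ts) = (y + (\<Sum>t\<leftarrow>ts. int (l t))) mod n"
  by (simp add: path_vertex_def sum_list_sum_nth atLeast0LessThan)

lemma walk_chain_append:
  "walk_chain n l y (ts @ us) = walk_chain n l y ts + walk_chain n l (y + (\<Sum>t\<leftarrow>ts. int (l t))) us"
  by (induction ts arbitrary: y) (simp_all add: add.assoc)

lemma walk_chain_append_diff:
  assumes "(\<Sum>t\<leftarrow>ts. int (l t)) = (\<Sum>t\<leftarrow>us. int (l t))"
  shows "walk_chain n l y (ts @ vs) - walk_chain n l y (us @ vs) = walk_chain n l y ts - walk_chain n l y us"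
  by (simp only: walk_chain_append assms add_diff_cancel_right)

lemma walk_chain_mod_cong: "y mod n = z mod n \<Longrightarrow> walk_chain n l y ts = walk_chain n l z ts"
proof (induction ts arbitrary: y z)
  case (Cons t ts)
  have shift: "(y + int (l t)) mod n = (z + int (l t)) mod n"
    using Cons.prems by (rule mod_add_cong) (rule refl)
  then have "walk_chain n l (y + int (l t)) ts = walk_chain n l (z + int (l t)) ts"
    by (rule Cons.IH)
  then show ?case by (simp only: walk_chain.simps Cons.prems shift)
qed simp

lemma edge_chain_refl: "edge_chain u u = 0"
  by (simp add: edge_chain_def fun_eq_iff)

lemma edge_chain_add_swap: "edge_chain u v + edge_chain v u = 0"
  by (auto simp: edge_chain_def fun_eq_iff)

lemma tri_boundary_eq: "tri_boundary (a, b, c) = edge_chain a b + edge_chain b c + edge_chain c a"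
  by (simp add: tri_boundary_def fun_eq_iff)

lemma tri_boundary_degenerate: "\<not> distinct [a, b, c] \<Longrightarrow> tri_boundary (a, b, c) = 0"
  by (auto simp: tri_boundary_eq edge_chain_refl edge_chain_add_swap add.assoc)

lemma is_boundary_zero: "is_boundary n k l 0"
  unfolding is_boundary_def by (rule exI[of _ "{}"]) (simp add: fun_eq_iff)

lemma is_boundary_add:
  assumes "is_boundary n k l c" and "is_boundary n k l d"
  shows "is_boundary n k l (c + d)"
proof -
  obtain S f where S: "finite S" "\<forall>(a, b, d) \<in> S. {a, b, d} \<in> tonn_faces n k l \<and> card {a, b, d} = 3"
    and c: "c = (\<lambda>e. \<Sum>t\<in>S. f t * tri_boundary t e)"
    using assms(1) unfolding is_boundary_def by blast
  obtain T g where T: "finite T" "\<forall>(a, b, d) \<in> T. {a, b, d} \<in> tonn_faces n k l \<and> card {a, b, d} = 3"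
    and d: "d = (\<lambda>e. \<Sum>t\<in>T. g t * tri_boundary t e)"
    using assms(2) unfolding is_boundary_def by blast
  define h where "h t = (if t \<in> S then f t else 0) + (if t \<in> T then g t else 0)" for t
  have "(\<Sum>t\<in>S \<union> T. h t * tri_boundary t e) =
      (\<Sum>t\<in>S. f t * tri_boundary t e) + (\<Sum>t\<in>T. g t * tri_boundary t e)" for e
  proof -
    have "(\<Sum>t\<in>S \<union> T. h t * tri_boundary t e) =
        (\<Sum>t\<in>S \<union> T. if t \<in> S then f t * tri_boundary t e else 0)
      + (\<Sum>t\<in>S \<union> T. if t \<in> T then g t * tri_boundary t e else 0)"
      unfolding h_def sum.distrib[symmetric] by (rule sum.cong) (auto simp: algebra_simps)
    with S(1) T(1) show ?thesis
      by (simp add: sum.If_cases Int_absorb1 Int_absorb2)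
  qed
  then have "c + d = (\<lambda>e. \<Sum>t\<in>S \<union> T. h t * tri_boundary t e)"
    by (simp add: c d fun_eq_iff)
  with S T show ?thesis
    unfolding is_boundary_def by (intro exI[of _ "S \<union> T"] exI[of _ h]) auto
qed

lemma is_boundary_uminus:
  assumes "is_boundary n k l c"
  shows "is_boundary n k l (- c)"
proof -
  obtain S f where S: "finite S" "\<forall>(a, b, d) \<in> S. {a, b, d} \<in> tonn_faces n k l \<and> card {a, b, d} = 3"
    and c: "c = (\<lambda>e. \<Sum>t\<in>S. f t * tri_boundary t e)"
    using assms unfolding is_boundary_def by blast
  have "- c = (\<lambda>e. \<Sum>t\<in>S. - f t * tri_boundary t e)"
    by (simp add: c fun_eq_iff sum_negf)
  with S show ?thesis
    unfolding is_boundary_def by (intro exI[of _ S] exI[of _ "\<lambda>t. - f t"]) auto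
qed

lemma is_boundary_diff:
  "is_boundary n k l c \<Longrightarrow> is_boundary n k l d \<Longrightarrow> is_boundary n k l (c - d)"
  using is_boundary_add[of n k l c "- d"] is_boundary_uminus[of n k l d] by simp

lemma is_boundary_diff_trans:
  "is_boundary n k l (a - b) \<Longrightarrow> is_boundary n k l (b - c) \<Longrightarrow> is_boundary n k l (a - c)"
  using is_boundary_add[of n k l "a - b" "b - c"] by simp

lemma is_boundary_tri_boundary:
  assumes "{a, b, c} \<in> tonn_faces n k l"
  shows "is_boundary n k l (tri_boundary (a, b, c))"
proof (cases "distinct [a, b, c]")
  case True
  then have "tri_boundary (a, b, c) = (\<lambda>e. \<Sum>t\<in>{(a, b, c)}. 1 * tri_boundary t e)"
    by simp
  with True assms show ?thesis
    unfolding is_boundary_def by (intro exI[of _ "{(a, b, c)}"] exI[of _ "\<lambda>_. 1"]) auto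
qed (simp add: tri_boundary_degenerate is_boundary_zero)

lemma permutes_exists_two_values:
  assumes "a \<in> S" "b \<in> S" "a \<noteq> b" "i \<in> S" "j \<in> S" "i \<noteq> j"
  shows "\<exists>\<sigma>. \<sigma> permutes S \<and> \<sigma> a = i \<and> \<sigma> b = j"
proof (intro exI conjI)
  let ?\<sigma> = "transpose a i \<circ> transpose b (transpose a i j)"
  show "?\<sigma> permutes S"
    using assms by (intro permutes_compose permutes_swap_id) (auto simp: transpose_def)
  show "?\<sigma> a = i" "?\<sigma> b = j"
    using assms by (auto simp: transpose_def)
qed

lemma int_dvd_abs_le_cases:
  fixes x n :: int
  assumes "n dvd x" and "\<bar>x\<bar> \<le> n"
  shows "x = - n \<or> x = 0 \<or> x = n"
proof -
  obtain t where "x = n * t" using assms(1) by blast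
  with assms(2) show ?thesis
    by (smt (verit) minus_mult_minus mult_le_cancel_left2 mult_less_0_iff
        mult_less_cancel_left2 zero_less_mult_pos)
qed

lemma walk_chain_upt_Suc:
  "walk_chain n l y [1..<Suc (Suc m)] = walk_chain n l y [1..<Suc m]
     + edge_chain ((y + (\<Sum>j\<in>{1..m}. int (l j))) mod n) ((y + (\<Sum>j\<in>{1..Suc m}. int (l j))) mod n)"
proof -
  have "(\<Sum>t\<leftarrow>[1..<Suc m]. int (l t)) = (\<Sum>j\<in>{1..m}. int (l j))"
    by (simp only: sum_set_upt_conv_sum_list_nat[symmetric] set_upt atLeastLessThanSuc_atLeastAtMost)
  then show ?thesis
    by (simp add: walk_chain_append add.assoc)
qed

lemma mset_concat_map_replicate:
  "mset (concat (map (\<lambda>i. replicate d i) xs)) = mset (concat (replicate d xs))"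
proof -
  have "mset (concat (replicate d xs)) = repeat_mset d (mset xs)"
    by (induction d) auto
  moreover have "mset (concat (map (\<lambda>i. replicate d i) xs)) = repeat_mset d (mset xs)"
    by (induction xs) auto
  ultimately show ?thesis by simp
qed

lemma sum_list_path_types:
  fixes f :: "nat \<Rightarrow> 'a :: comm_semiring_1"
  shows "(\<Sum>t\<leftarrow>path_types k p. f t) = (\<Sum>i\<in>{1..k}. of_nat (p i) * f i)"
proof -
  have "(\<Sum>t\<leftarrow>path_types k p. f t) = (\<Sum>i\<leftarrow>[1..<Suc k]. of_nat (p i) * f i)"
    unfolding path_types_def by (induction k) (simp_all add: sum_list_replicate)
  also have "\<dots> = (\<Sum>i\<in>{1..k}. of_nat (p i) * f i)"
    by (simp only: sum_set_upt_conv_sum_list_nat[symmetric] set_upt atLeastLessThanSuc_atLeastAtMost)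
  finally show ?thesis .
qed

lemma closed_path_dvd:
  assumes "x0 \<in> {0..<n}"
    and "path_vertex n l (path_types k p) x0 (length (path_types k p)) = x0"
  shows "n dvd (\<Sum>i\<in>{1..k}. int (p i) * int (l i))"
proof -
  have "(x0 + (\<Sum>i\<in>{1..k}. int (p i) * int (l i))) mod n = x0 mod n"
    using assms by (simp add: path_vertex_length sum_list_path_types)
  then have "n dvd (x0 + (\<Sum>i\<in>{1..k}. int (p i) * int (l i))) - x0"
    by (simp only: mod_eq_dvd_iff)
  then show ?thesis by simp
qed

lemma shifted_indicators_if_omega_eq:
  assumes "0 < k" and "finite I" and "finite J"
    and omega: "\<forall>j\<in>{1..k}. (\<Sum>i\<in>{1..k}. int (p i) * a_vec k i j) = a_set k I j - a_set k J j"
  shows "\<exists>c. \<forall>j\<in>{1..k}. int (p j) = c + of_bool (j \<in> I) - of_bool (j \<in> J)"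
proof -
  define P where "P = (\<Sum>i\<in>{1..k}. int (p i))"
  have omega_coord: "(\<Sum>i\<in>{1..k}. int (p i) * a_vec k i j) = int k * int (p j) - P" if "j \<in> {1..k}" for j
  proof -
    have "(\<Sum>i\<in>{1..k}. int (p i) * a_vec k i j)
        = (\<Sum>i\<in>{1..k}. (if i = j then int k * int (p i) else 0) - int (p i))"
      by (intro sum.cong) (auto simp: a_vec_def algebra_simps)
    with that show ?thesis by (simp add: sum_subtractf P_def)
  qed
  have a_set_coord: "a_set k K j = int k * of_bool (j \<in> K) - int (card K)" if "finite K" for K j
  proof -
    have "a_set k K j = (\<Sum>i\<in>K. (if i = j then int k else 0) - 1)"
      unfolding a_set_def a_vec_def by (intro sum.cong) auto
    with that show ?thesis by (simp add: sum_subtractf)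
  qed
  define q where "q j = int (p j) - of_bool (j \<in> I) + of_bool (j \<in> J)" for j
  have "int k * q j = P - int (card I) + int (card J)" if "j \<in> {1..k}" for j
  proof -
    have "int k * int (p j) - P
        = (int k * of_bool (j \<in> I) - int (card I)) - (int k * of_bool (j \<in> J) - int (card J))"
      using omega[rule_format, OF that]
      unfolding omega_coord[OF that] a_set_coord[OF assms(2)] a_set_coord[OF assms(3)] .
    then show ?thesis
      unfolding q_def by (simp add: algebra_simps)
  qed
  then have q_const: "q j = q 1" if "j \<in> {1..k}" for j
    using that assms(1) by (metis atLeastAtMost_iff le_refl less_one mult_cancel_left not_le of_nat_eq_0_iff)
  show ?thesis
  proof (intro exI ballI)
    fix j assume "j \<in> {1..k}"
    from q_const[OF this] show "int (p j) = q 1 + of_bool (j \<in> I) - of_bool (j \<in> J)"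
      unfolding q_def by linarith
  qed
qed

locale tonnetz =
  fixes n :: int and k :: nat and l :: "nat \<Rightarrow> nat"
  assumes k_pos: "0 < k"
    and n_eq: "n = (\<Sum>i\<in>{1..k}. int (l i))"
begin

abbreviation boundary :: "(int \<times> int \<Rightarrow> int) \<Rightarrow> bool" where
  "boundary \<equiv> is_boundary n k l"

lemma tonn_simplex_vertex:
  assumes "\<sigma> permutes {1..k}" and "m \<le> k"
  shows "(x + (\<Sum>j\<in>{1..m}. int (l (\<sigma> j)))) mod n \<in> tonn_simplex n k l x \<sigma>"
proof (cases "m < k")
  case True
  then show ?thesis unfolding tonn_simplex_def by blast
next
  case False
  have "(\<Sum>j\<in>{1..k}. int (l (\<sigma> j))) = n"
    unfolding n_eq using sum.reindex_bij_betw[OF permutes_imp_bij[OF assms(1)]] by simp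
  with False assms(2) have "(x + (\<Sum>j\<in>{1..m}. int (l (\<sigma> j)))) mod n = (x + (\<Sum>j\<in>{1..0}. int (l (\<sigma> j)))) mod n"
    by simp
  with k_pos show ?thesis unfolding tonn_simplex_def by blast
qed

lemma two_steps_in_face:
  assumes "i \<in> {1..k}" and "j \<in> {1..k}" and "i \<noteq> j"
  shows "{y mod n, (y + int (l i)) mod n, (y + int (l i) + int (l j)) mod n} \<in> tonn_faces n k l"
proof -
  have "2 \<le> k" using assms by auto
  then obtain \<sigma> where \<sigma>: "\<sigma> permutes {1..k}" "\<sigma> 1 = i" "\<sigma> 2 = j"
    using permutes_exists_two_values[of 1 "{1..k}" 2 i j] assms by auto
  have "(y + (\<Sum>j\<in>{1..m}. int (l (\<sigma> j)))) mod n \<in> tonn_simplex n k l y \<sigma>" if "m \<le> 2" for m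
    using tonn_simplex_vertex[OF \<sigma>(1)] that \<open>2 \<le> k\<close> by simp
  from this[of 0] this[of 1] this[of 2] \<sigma>
  have "{y mod n, (y + int (l i)) mod n, (y + int (l i) + int (l j)) mod n} \<subseteq> tonn_simplex n k l y \<sigma>"
    by (simp add: numeral_2_eq_2 add.assoc)
  with \<sigma>(1) show ?thesis unfolding tonn_faces_def by blast
qed

lemma walk_chain_swap_boundary:
  assumes "i \<in> {1..k}" and "j \<in> {1..k}"
  shows "boundary (walk_chain n l y [i, j] - walk_chain n l y [j, i])"
proof (cases "i = j")
  case False
  \<comment> \<open>The triangles [y, y+l_i, y+l_i+l_j] and [y, y+l_j, y+l_i+l_j] share their closing edge.\<close>
  define v0 vi vj vij where "v0 = y mod n" and "vi = (y + int (l i)) mod n"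
    and "vj = (y + int (l j)) mod n" and "vij = (y + int (l i) + int (l j)) mod n"
  have "{v0, vi, vij} \<in> tonn_faces n k l"
    unfolding v0_def vi_def vij_def using assms False by (rule two_steps_in_face)
  moreover have "{v0, vj, vij} \<in> tonn_faces n k l"
    using two_steps_in_face[of j i y] assms False
    unfolding v0_def vj_def vij_def by (simp add: ac_simps)
  ultimately have "boundary (tri_boundary (v0, vi, vij) - tri_boundary (v0, vj, vij))"
    by (intro is_boundary_diff is_boundary_tri_boundary)
  moreover have "tri_boundary (v0, vi, vij) - tri_boundary (v0, vj, vij)
      = walk_chain n l y [i, j] - walk_chain n l y [j, i]"
    unfolding v0_def vi_def vj_def vij_def tri_boundary_eq
    by (simp add: ac_simps)
  ultimately show ?thesis by simp
qed (simp add: is_boundary_zero)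

lemma walk_chain_move_to_front_boundary:
  assumes "u \<in> {1..k}" and "set ts \<subseteq> {1..k}"
  shows "boundary (walk_chain n l y (ts @ u # us) - walk_chain n l y (u # ts @ us))"
  using assms(2)
proof (induction ts arbitrary: y)
  case Nil
  show ?case by (simp only: append_Nil diff_self is_boundary_zero)
next
  case (Cons t ts)
  have "set ts \<subseteq> {1..k}" using Cons.prems by simp
  from Cons.IH[OF this, of "y + int (l t)"]
  have "boundary (walk_chain n l y (t # ts @ u # us) - walk_chain n l y (t # u # ts @ us))"
    by (simp only: walk_chain.simps add_diff_cancel_left)
  moreover have "boundary (walk_chain n l y [t, u] - walk_chain n l y [u, t])"
    using Cons.prems assms(1) by (intro walk_chain_swap_boundary) auto
  then have "boundary (walk_chain n l y ([t, u] @ ts @ us) - walk_chain n l y ([u, t] @ ts @ us))"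
    by (subst walk_chain_append_diff) simp_all
  ultimately show ?case
    unfolding append_Cons append_Nil by (rule is_boundary_diff_trans)
qed

lemma walk_chain_perm_boundary:
  assumes "mset ts = mset us" and "set us \<subseteq> {1..k}"
  shows "boundary (walk_chain n l y ts - walk_chain n l y us)"
  using assms
proof (induction us arbitrary: ts y)
  case Nil
  then have "ts = []" by simp
  then show ?case by (simp only: diff_self is_boundary_zero)
next
  case (Cons u us)
  then have "u \<in> set ts" by (metis list.set_intros(1) set_mset_mset)
  then obtain as bs where ts: "ts = as @ u # bs" by (meson split_list)
  have "set ts = set (u # us)" by (metis Cons.prems(1) set_mset_mset)
  with Cons.prems(2) ts have "u \<in> {1..k}" "set as \<subseteq> {1..k}" "set us \<subseteq> {1..k}"
    by auto
  then have "boundary (walk_chain n l y ts - walk_chain n l y (u # as @ bs))"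
    unfolding ts by (intro walk_chain_move_to_front_boundary)
  moreover have "mset (as @ bs) = mset us" using Cons.prems(1) ts by simp
  from Cons.IH[OF this \<open>set us \<subseteq> {1..k}\<close>, of "y + int (l u)"]
  have "boundary (walk_chain n l y (u # as @ bs) - walk_chain n l y (u # us))"
    by (simp only: walk_chain.simps add_diff_cancel_left)
  ultimately show ?case by (rule is_boundary_diff_trans)
qed

lemma walk_chain_fan_boundary:
  fixes y :: int
  defines "v \<equiv> \<lambda>m. (y + (\<Sum>j\<in>{1..m}. int (l j))) mod n"
  shows "m \<le> k \<Longrightarrow> boundary (walk_chain n l y [1..<Suc m] + edge_chain (v m) (v 0))"
proof (induction m)
  case 0
  have "walk_chain n l y [1..<Suc 0] = 0" by simp
  then show ?case by (simp only: edge_chain_refl add_0_right is_boundary_zero)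
next
  case (Suc m)
  have "v i \<in> tonn_simplex n k l y id" if "i \<le> k" for i
    using tonn_simplex_vertex[OF permutes_id that] by (simp add: v_def)
  with Suc.prems have "{v 0, v m, v (Suc m)} \<in> tonn_faces n k l"
    unfolding tonn_faces_def by (intro CollectI exI[of _ y] exI[of _ id]) (auto simp: permutes_id)
  moreover have "boundary (walk_chain n l y [1..<Suc m] + edge_chain (v m) (v 0))"
    by (rule Suc.IH) (use Suc.prems in simp)
  ultimately have "boundary ((walk_chain n l y [1..<Suc m] + edge_chain (v m) (v 0)) + tri_boundary (v 0, v m, v (Suc m)))"
    by (simp only: is_boundary_add is_boundary_tri_boundary)
  also have "(walk_chain n l y [1..<Suc m] + edge_chain (v m) (v 0)) + tri_boundary (v 0, v m, v (Suc m))
      = walk_chain n l y [1..<Suc m] + (edge_chain (v m) (v 0) + edge_chain (v 0) (v m))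
        + edge_chain (v m) (v (Suc m)) + edge_chain (v (Suc m)) (v 0)"
    by (simp only: tri_boundary_eq add.assoc)
  also have "\<dots> = walk_chain n l y [1..<Suc (Suc m)] + edge_chain (v (Suc m)) (v 0)"
    by (simp only: edge_chain_add_swap add_0_right walk_chain_upt_Suc v_def)
  finally show ?case .
qed

lemma walk_chain_cycle_boundary: "boundary (walk_chain n l y [1..<Suc k])"
proof -
  have "(y + (\<Sum>j\<in>{1..k}. int (l j))) mod n = y mod n"
    and "(y + (\<Sum>j\<in>{1..0}. int (l j))) mod n = y mod n"
    unfolding n_eq[symmetric] by simp_all
  with walk_chain_fan_boundary[where y = y and m = k] show ?thesis
    by (simp only: order_refl edge_chain_refl add_0_right)
qed

lemma walk_chain_cycles_boundary: "boundary (walk_chain n l y (concat (replicate d [1..<Suc k])))"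
proof (induction d arbitrary: y)
  case 0
  show ?case by (simp only: replicate_0 concat.simps walk_chain.simps is_boundary_zero)
next
  case (Suc d)
  have "(\<Sum>t\<leftarrow>[1..<Suc k]. int (l t)) = n"
    by (simp only: n_eq sum_set_upt_conv_sum_list_nat[symmetric] set_upt atLeastLessThanSuc_atLeastAtMost)
  then have "walk_chain n l y (concat (replicate (Suc d) [1..<Suc k]))
      = walk_chain n l y [1..<Suc k] + walk_chain n l y (concat (replicate d [1..<Suc k]))"
    using walk_chain_mod_cong[where y = "y + n" and z = y] by (simp add: walk_chain_append)
  with Suc.IH show ?case
    by (simp only: is_boundary_add walk_chain_cycle_boundary)
qed

lemma path_chain_constant_boundary:
  assumes "\<forall>i\<in>{1..k}. p i = d"
  shows "boundary (path_chain n l (path_types k p) y)"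
proof -
  have "path_types k p = concat (map (\<lambda>i. replicate d i) [1..<Suc k])"
    unfolding path_types_def using assms by (intro arg_cong[where f = concat] map_cong) auto
  then have "mset (path_types k p) = mset (concat (replicate d [1..<Suc k]))"
    by (simp only: mset_concat_map_replicate)
  then have "boundary (walk_chain n l y (path_types k p) - walk_chain n l y (concat (replicate d [1..<Suc k])))"
    by (rule walk_chain_perm_boundary) auto
  from is_boundary_add[OF this walk_chain_cycles_boundary[of y d]]
  show ?thesis by (simp only: path_chain_eq_walk_chain diff_add_cancel)
qed

lemma sum_shifted_indicators:
  assumes I: "I \<subseteq> {1..k}" and J: "J \<subseteq> {1..k}"
    and shifted: "\<forall>i\<in>{1..k}. int (p i) = c + of_bool (i \<in> I) - of_bool (i \<in> J)"
  shows "(\<Sum>i\<in>{1..k}. int (p i) * int (l i)) = c * n + ((\<Sum>i\<in>I. int (l i)) - (\<Sum>i\<in>J. int (l i)))"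
proof -
  have "(\<Sum>i\<in>{1..k}. int (p i) * int (l i))
      = (\<Sum>i\<in>{1..k}. c * int (l i) + of_bool (i \<in> I) * int (l i) - of_bool (i \<in> J) * int (l i))"
  proof (rule sum.cong[OF refl])
    fix i assume "i \<in> {1..k}"
    then show "int (p i) * int (l i)
        = c * int (l i) + of_bool (i \<in> I) * int (l i) - of_bool (i \<in> J) * int (l i)"
      by (simp only: shifted[rule_format]) (simp add: algebra_simps)
  qed
  also have "\<dots> = c * (\<Sum>i\<in>{1..k}. int (l i))
      + ((\<Sum>i\<in>{1..k}. of_bool (i \<in> I) * int (l i)) - (\<Sum>i\<in>{1..k}. of_bool (i \<in> J) * int (l i)))"
    by (simp only: sum.distrib sum_subtractf sum_distrib_left add_diff_eq)
  also have "\<dots> = c * n + ((\<Sum>i\<in>I. int (l i)) - (\<Sum>i\<in>J. int (l i)))"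
    using I J by (simp add: n_eq Int_absorb1)
  finally show ?thesis .
qed

lemma generic_subset_sums_cong_cases:
  assumes "generic k l" and I: "I \<subseteq> {1..k}" and J: "J \<subseteq> {1..k}"
    and "n dvd (\<Sum>i\<in>I. int (l i)) - (\<Sum>i\<in>J. int (l i))"
  shows "I = J \<or> I = {1..k} \<and> J = {} \<or> I = {} \<and> J = {1..k}"
proof -
  have generic_int: "I' = J'" if "I' \<subseteq> {1..k}" "J' \<subseteq> {1..k}"
    and "(\<Sum>i\<in>I'. int (l i)) = (\<Sum>i\<in>J'. int (l i))" for I' J'
    using assms(1) that unfolding generic_def by (metis of_nat_eq_iff of_nat_sum)
  define A B where "A = (\<Sum>i\<in>I. int (l i))" and "B = (\<Sum>i\<in>J. int (l i))"
  have "0 \<le> A" "A \<le> n" "0 \<le> B" "B \<le> n"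
    using I J unfolding A_def B_def n_eq by (auto intro: sum_nonneg sum_mono2)
  then have "\<bar>A - B\<bar> \<le> n" by linarith
  with assms(4) consider "A - B = - n" | "A - B = 0" | "A - B = n"
    using int_dvd_abs_le_cases unfolding A_def B_def by blast
  then show ?thesis
  proof cases
    case 1
    then have "A = (\<Sum>i\<in>{}. int (l i))" "B = (\<Sum>i\<in>{1..k}. int (l i))"
      using \<open>0 \<le> A\<close> \<open>B \<le> n\<close> by (simp_all add: n_eq)
    then show ?thesis
      using generic_int[OF I, of "{}"] generic_int[OF J, of "{1..k}"] by (simp add: A_def B_def)
  next
    case 2
    then show ?thesis using generic_int[OF I J] by (simp add: A_def B_def)
  next
    case 3
    then have "A = (\<Sum>i\<in>{1..k}. int (l i))" "B = (\<Sum>i\<in>{}. int (l i))"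
      using \<open>A \<le> n\<close> \<open>0 \<le> B\<close> by (simp_all add: n_eq)
    then show ?thesis
      using generic_int[OF I, of "{1..k}"] generic_int[OF J, of "{}"] by (simp add: A_def B_def)
  qed
qed

lemma constant_if_closed_near_constant:
  assumes "generic k l"
    and near: "\<forall>i\<in>{1..k}. \<bar>int (p i) - c\<bar> \<le> 1"
    and closed: "n dvd (\<Sum>i\<in>{1..k}. int (p i) * int (l i))"
  shows "\<exists>d. \<forall>i\<in>{1..k}. p i = d"
proof -
  define I J where "I = {i\<in>{1..k}. int (p i) = c + 1}" and "J = {i\<in>{1..k}. int (p i) = c - 1}"
  have I: "I \<subseteq> {1..k}" and J: "J \<subseteq> {1..k}"
    unfolding I_def J_def by auto
  have shifted: "\<forall>i\<in>{1..k}. int (p i) = c + of_bool (i \<in> I) - of_bool (i \<in> J)"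
  proof
    fix i assume "i \<in> {1..k}"
    with near have "int (p i) \<in> {c - 1, c, c + 1}" by force
    with \<open>i \<in> {1..k}\<close> show "int (p i) = c + of_bool (i \<in> I) - of_bool (i \<in> J)"
      unfolding I_def J_def by auto
  qed
  have "n dvd c * n + ((\<Sum>i\<in>I. int (l i)) - (\<Sum>i\<in>J. int (l i)))"
    using closed unfolding sum_shifted_indicators[OF I J shifted] .
  then have "n dvd (\<Sum>i\<in>I. int (l i)) - (\<Sum>i\<in>J. int (l i))"
    by (simp only: dvd_add_right_iff dvd_triv_right)
  with assms(1) I J have "I = J \<or> I = {1..k} \<and> J = {} \<or> I = {} \<and> J = {1..k}"
    by (rule generic_subset_sums_cong_cases)
  with shifted have "(\<forall>i\<in>{1..k}. int (p i) = c) \<or> (\<forall>i\<in>{1..k}. int (p i) = c + 1)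
      \<or> (\<forall>i\<in>{1..k}. int (p i) = c - 1)"
    by auto
  then show ?thesis by (metis nat_int)
qed

lemma path_chain_boundary_if_near_constant:
  assumes "generic k l" and "x0 \<in> {0..<n}"
    and "path_vertex n l (path_types k p) x0 (length (path_types k p)) = x0"
    and "\<forall>i\<in>{1..k}. \<bar>int (p i) - c\<bar> \<le> 1"
  shows "boundary (path_chain n l (path_types k p) x0)"
proof -
  have "n dvd (\<Sum>i\<in>{1..k}. int (p i) * int (l i))"
    using assms(2,3) by (rule closed_path_dvd)
  with assms(1,4) obtain d where "\<forall>i\<in>{1..k}. p i = d"
    using constant_if_closed_near_constant by blast
  then show ?thesis by (rule path_chain_constant_boundary)
qed

end

theorem proposition5p6:
  fixes k :: nat and l p :: "nat \<Rightarrow> nat" and n x0 :: int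
  assumes "k \<ge> 2"
    and "\<forall>i\<in>{1..k}. l i > 0"
    and "generic k l" and "reduced k l"
    and "n = (\<Sum>i\<in>{1..k}. int (l i))"
    and "x0 \<in> {0..<n}"
    and closed: "path_vertex n l (path_types k p) x0 (length (path_types k p)) = x0"
    and nontrivial: "\<not> is_boundary n k l (path_chain n l (path_types k p) x0)"
  shows "(\<exists>i\<in>{1..k}. p i \<ge> 3) \<and>
    \<not> (\<exists>I J. I \<subseteq> {1..k} \<and> J \<subseteq> {1..k} \<and>
        (\<forall>j\<in>{1..k}. (\<Sum>i\<in>{1..k}. int (p i) * a_vec k i j) = a_set k I j - a_set k J j))"
proof -
  interpret tonnetz n k l
  proof
    show "0 < k" using assms(1) by simp
  qed (rule assms(5))
  have far: "\<exists>i\<in>{1..k}. 1 < \<bar>int (p i) - c\<bar>" for c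
    using path_chain_boundary_if_near_constant[OF assms(3,6) closed] nontrivial by (meson not_le)
  obtain i where "i \<in> {1..k}" and "1 < \<bar>int (p i) - 1\<bar>"
    using far by blast
  then have "\<exists>i\<in>{1..k}. p i \<ge> 3"
    by (intro bexI[of _ i]) arith+
  moreover have "\<not> (\<exists>I J. I \<subseteq> {1..k} \<and> J \<subseteq> {1..k} \<and>
        (\<forall>j\<in>{1..k}. (\<Sum>i\<in>{1..k}. int (p i) * a_vec k i j) = a_set k I j - a_set k J j))"
  proof (intro notI, elim exE conjE)
    fix I J
    assume I: "I \<subseteq> {1..k}" and J: "J \<subseteq> {1..k}"
      and "\<forall>j\<in>{1..k}. (\<Sum>i\<in>{1..k}. int (p i) * a_vec k i j) = a_set k I j - a_set k J j"
    then obtain c where shifted: "\<forall>j\<in>{1..k}. int (p j) = c + of_bool (j \<in> I) - of_bool (j \<in> J)"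
      using shifted_indicators_if_omega_eq[OF k_pos finite_subset[OF I] finite_subset[OF J]] by blast
    obtain i where "i \<in> {1..k}" and "1 < \<bar>int (p i) - c\<bar>"
      using far by blast
    with shifted show False
      by (cases "i \<in> I"; cases "i \<in> J") auto
  qed
  ultimately show ?thesis by blast
qed

end
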